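(* Let $a,b\geq1$ and $P=[a]\times[b]$. For every $p=(i,j)\in P$, \[\mathbb{1}_p=\sum_{\substack{(i',j')\in P\\ i'\geq i,\ j'\geq j}}T^-_{(i',j')}\;-\;\sum_{\substack{(i',j')\in P\\ i'> i,\ j'> j}}T^+_{(i',j')}\] as functions $\mathcal{J}(P)\to\mathbb{R}$.
   Context: $[a]\times[b]=\{(i,j)\colon 1\le i\le a,\ 1\le j\le b\}$ with $(i,j)\le(i',j')$ iff $i\le i'$ and $j\le j'$. $\mathcal{J}(P)$ is the set of order ideals of $P$. For $x\in P$, $I\in\mathcal{J}(P)$: $\mathbb{1}_x(I)=1$ if $x\in I$, else $0$; $T_x^+(I)=1$ if $x$ is a minimal element of $P\setminus I$, else $0$; $T_x^-(I)=1$ if $x$ is a maximal element of $I$, else $0$. *)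

theory Defs
  imports Complex_Main "HOL-Library.Product_Order"
begin

definition grid :: "nat \<Rightarrow> nat \<Rightarrow> (nat \<times> nat) set" where
  "grid a b = {1..a} \<times> {1..b}"

definition order_ideals :: "'a::order set \<Rightarrow> 'a set set" where
  "order_ideals P = {I. I \<subseteq> P \<and> (\<forall>x\<in>I. \<forall>y\<in>P. y \<le> x \<longrightarrow> y \<in> I)}"

definition ind :: "'a \<Rightarrow> 'a set \<Rightarrow> real" where
  "ind x I = (if x \<in> I then 1 else 0)"

definition Tplus :: "'a::order set \<Rightarrow> 'a \<Rightarrow> 'a set \<Rightarrow> real" where
  "Tplus P x I = (if x \<in> P - I \<and> (\<forall>y\<in>P - I. \<not> y < x) then 1 else 0)"

definition Tminus :: "'a::order \<Rightarrow> 'a set \<Rightarrow> real" where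
  "Tminus x I = (if x \<in> I \<and> (\<forall>y\<in>I. \<not> x < y) then 1 else 0)"

end

theory Submission
  imports Defs
begin

text \<open>Write \<open>f(c, r)\<close> for the indicator of an order ideal \<open>I\<close> of the grid, extended by
  \<open>0\<close> outside the grid. A point is maximal in \<open>I\<close> iff neither of its upper covers lies in \<open>I\<close>,
  and a point is minimal in the complement iff both of its lower covers lie in \<open>I\<close>; hence
  \<open>T\<^sup>-\<^bsub>(c,r)\<^esub> - T\<^sup>+\<^bsub>(c+1,r+1)\<^esub> = f(c,r) - f(c+1,r) - f(c,r+1) + f(c+1,r+1)\<close>, the two
  expressions sharing the term \<open>f(c+1,r) f(c,r+1)\<close>. Summing this over the rectangle
  \<open>[i,a] \<times> [j,b]\<close> telescopes to \<open>f(i,j)\<close>.\<close>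

lemma less_nat_prod_iff:
  "(c, r) < (c', r') \<longleftrightarrow> (Suc c, r) \<le> (c', r') \<or> (c, Suc r) \<le> (c' :: nat, r' :: nat)"
  by (auto simp: less_prod_def)

lemma sum_mixed_difference:
  fixes F :: "nat \<Rightarrow> nat \<Rightarrow> 'a::ab_group_add"
  assumes "i \<le> Suc a" "j \<le> Suc b"
  shows "(\<Sum>c=i..a. \<Sum>r=j..b. F c r - F (Suc c) r - F c (Suc r) + F (Suc c) (Suc r))
       = F i j - F (Suc a) j - F i (Suc b) + F (Suc a) (Suc b)"
proof -
  define G where "G c = F c (Suc b) - F c j" for c
  have "(\<Sum>r=j..b. F c r - F (Suc c) r - F c (Suc r) + F (Suc c) (Suc r))
      = (\<Sum>r=j..b. (F (Suc c) (Suc r) - F c (Suc r)) - (F (Suc c) r - F c r))" for c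
    by (simp add: algebra_simps)
  also have "\<dots> c = G (Suc c) - G c" for c
    using sum_Suc_diff[OF assms(2), of "\<lambda>r. F (Suc c) r - F c r"] by (simp add: G_def)
  finally have "(\<Sum>c=i..a. \<Sum>r=j..b. F c r - F (Suc c) r - F c (Suc r) + F (Suc c) (Suc r))
      = (\<Sum>c=i..a. G (Suc c) - G c)"
    by simp
  also have "\<dots> = G (Suc a) - G i"
    by (rule sum_Suc_diff[OF assms(1)])
  finally show ?thesis
    by (simp add: G_def)
qed

lemma order_ideal_subset: "I \<in> order_ideals P \<Longrightarrow> I \<subseteq> P"
  by (simp add: order_ideals_def)

lemma order_idealD: "I \<in> order_ideals P \<Longrightarrow> x \<in> I \<Longrightarrow> y \<in> P \<Longrightarrow> y \<le> x \<Longrightarrow> y \<in> I"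
  by (auto simp: order_ideals_def)

lemma grid_ideal_downward:
  assumes "I \<in> order_ideals (grid a b)" "x \<in> I" "(1, 1) \<le> y" "y \<le> x"
  shows "y \<in> I"
proof (rule order_idealD[OF assms(1,2) _ assms(4)])
  have "x \<in> grid a b" using assms(1,2) order_ideal_subset by blast
  then show "y \<in> grid a b" using assms(3,4) by (cases x, cases y) (auto simp: grid_def)
qed

lemma grid_ideal_maximal_iff:
  assumes "I \<in> order_ideals (grid a b)" "1 \<le> c" "1 \<le> r"
  shows "(\<forall>y\<in>I. \<not> (c, r) < y) \<longleftrightarrow> (Suc c, r) \<notin> I \<and> (c, Suc r) \<notin> I"
proof
  show "\<forall>y\<in>I. \<not> (c, r) < y" if "(Suc c, r) \<notin> I \<and> (c, Suc r) \<notin> I"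
  proof (intro ballI notI)
    fix y assume "y \<in> I" "(c, r) < y"
    then have "(Suc c, r) \<in> I \<or> (c, Suc r) \<in> I"
      using assms grid_ideal_downward[OF assms(1) \<open>y \<in> I\<close>]
      by (cases y) (auto simp: less_nat_prod_iff)
    with that show False by blast
  qed
qed (auto simp: less_prod_def)

lemma grid_ideal_minimal_complement_iff:
  assumes "I \<in> order_ideals (grid a b)" "(Suc c, Suc r) \<in> grid a b" "1 \<le> c" "1 \<le> r"
  shows "(\<forall>y\<in>grid a b - I. \<not> y < (Suc c, Suc r)) \<longleftrightarrow> (c, Suc r) \<in> I \<and> (Suc c, r) \<in> I"
proof
  have "(c, Suc r) \<in> grid a b" "(Suc c, r) \<in> grid a b"
    using assms(2-4) by (auto simp: grid_def)
  moreover have "(c, Suc r) < (Suc c, Suc r)" "(Suc c, r) < (Suc c, Suc r)"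
    by (auto simp: less_prod_def)
  ultimately show "(c, Suc r) \<in> I \<and> (Suc c, r) \<in> I"
    if "\<forall>y\<in>grid a b - I. \<not> y < (Suc c, Suc r)"
    using that by blast
next
  show "\<forall>y\<in>grid a b - I. \<not> y < (Suc c, Suc r)" if "(c, Suc r) \<in> I \<and> (Suc c, r) \<in> I"
  proof (intro ballI notI)
    fix y assume "y \<in> grid a b - I" "y < (Suc c, Suc r)"
    then show False
      using that order_idealD[OF assms(1)] by (cases y) (auto simp: less_nat_prod_iff)
  qed
qed

lemma Tminus_grid_ideal:
  assumes "I \<in> order_ideals (grid a b)" "1 \<le> c" "1 \<le> r"
  shows "Tminus (c, r) I
    = ind (c, r) I - ind (Suc c, r) I - ind (c, Suc r) I + ind (Suc c, r) I * ind (c, Suc r) I"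
proof -
  have "(c, r) \<in> I" if "(Suc c, r) \<in> I \<or> (c, Suc r) \<in> I"
    using that assms grid_ideal_downward[OF assms(1)] by auto
  then show ?thesis
    unfolding Tminus_def grid_ideal_maximal_iff[OF assms] by (auto simp: ind_def)
qed

lemma Tplus_grid_ideal:
  assumes "I \<in> order_ideals (grid a b)" "1 \<le> c" "1 \<le> r"
  shows "Tplus (grid a b) (Suc c, Suc r) I
    = ind (c, Suc r) I * ind (Suc c, r) I - ind (Suc c, Suc r) I"
proof (cases "(Suc c, Suc r) \<in> grid a b")
  case True
  have "(c, Suc r) \<in> I \<and> (Suc c, r) \<in> I" if "(Suc c, Suc r) \<in> I"
    using that assms grid_ideal_downward[OF assms(1)] by auto
  then show ?thesis
    unfolding Tplus_def grid_ideal_minimal_complement_iff[OF assms(1) True assms(2,3)]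
    using True by (auto simp: ind_def)
next
  case False
  then have "(Suc c, r) \<notin> grid a b \<or> (c, Suc r) \<notin> grid a b"
    using assms(2,3) by (auto simp: grid_def)
  then show ?thesis
    using False order_ideal_subset[OF assms(1)] by (auto simp: Tplus_def ind_def)
qed

lemma Tminus_eq_mixed_difference_plus_Tplus:
  assumes "I \<in> order_ideals (grid a b)" "1 \<le> c" "1 \<le> r"
  shows "Tminus (c, r) I
    = ind (c, r) I - ind (Suc c, r) I - ind (c, Suc r) I + ind (Suc c, Suc r) I
      + Tplus (grid a b) (Suc c, Suc r) I"
  using Tminus_grid_ideal[OF assms] Tplus_grid_ideal[OF assms] by simp

theorem lemma3p8:
  fixes a b i j :: nat
  assumes "a \<ge> 1" and "b \<ge> 1" and "(i, j) \<in> grid a b"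
  shows "\<forall>I \<in> order_ideals (grid a b).
    ind (i, j) I =
      (\<Sum>q \<in> {(i', j') \<in> grid a b. i' \<ge> i \<and> j' \<ge> j}. Tminus q I)
    - (\<Sum>q \<in> {(i', j') \<in> grid a b. i' > i \<and> j' > j}. Tplus (grid a b) q I)"
proof
  fix I assume I: "I \<in> order_ideals (grid a b)"
  have ij: "1 \<le> i" "i \<le> a" "1 \<le> j" "j \<le> b"
    using assms(3) by (auto simp: grid_def)
  have ind_outside: "ind x I = 0" if "x \<notin> grid a b" for x
    using that order_ideal_subset[OF I] by (auto simp: ind_def)
  have "{(i', j') \<in> grid a b. i' \<ge> i \<and> j' \<ge> j} = {i..a} \<times> {j..b}"
    using ij by (auto simp: grid_def)
  then have "(\<Sum>q \<in> {(i', j') \<in> grid a b. i' \<ge> i \<and> j' \<ge> j}. Tminus q I)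
      = (\<Sum>c=i..a. \<Sum>r=j..b. Tminus (c, r) I)"
    by (simp add: sum.cartesian_product')
  also have "\<dots> = (\<Sum>c=i..a. \<Sum>r=j..b.
        ind (c, r) I - ind (Suc c, r) I - ind (c, Suc r) I + ind (Suc c, Suc r) I)
      + (\<Sum>c=i..a. \<Sum>r=j..b. Tplus (grid a b) (Suc c, Suc r) I)"
    using ij by (simp add: Tminus_eq_mixed_difference_plus_Tplus[OF I] sum.distrib)
  also have "(\<Sum>c=i..a. \<Sum>r=j..b.
        ind (c, r) I - ind (Suc c, r) I - ind (c, Suc r) I + ind (Suc c, Suc r) I) = ind (i, j) I"
    using ij sum_mixed_difference[of i a j b "\<lambda>c r. ind (c, r) I"]
    by (simp add: ind_outside grid_def)
  also have "(\<Sum>c=i..a. \<Sum>r=j..b. Tplus (grid a b) (Suc c, Suc r) I)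
      = (\<Sum>q \<in> {Suc i..Suc a} \<times> {Suc j..Suc b}. Tplus (grid a b) q I)"
    by (simp only: sum.cartesian_product' sum.shift_bounds_cl_Suc_ivl)
  also have "\<dots> = (\<Sum>q \<in> {(i', j') \<in> grid a b. i' > i \<and> j' > j}. Tplus (grid a b) q I)"
    by (rule sum.mono_neutral_right) (auto simp: grid_def Tplus_def)
  finally show "ind (i, j) I =
      (\<Sum>q \<in> {(i', j') \<in> grid a b. i' \<ge> i \<and> j' \<ge> j}. Tminus q I)
    - (\<Sum>q \<in> {(i', j') \<in> grid a b. i' > i \<and> j' > j}. Tplus (grid a b) q I)"
    by simp
qed

end
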